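(* Let $X$ be an arbitrary set, let $k: X\times X\to [0,+\infty]$ be a symmetric function, and let $\emptyset\neq H\subset L\subset X$. Then the rendezvous set $R(H,L)$ is nonempty.
   Context: For $H,L\subset X$ and $n\in\mathbb{N}$, the $n$-th rendezvous set of $L$ with respect to $H$ is $R_n(H,L):=\bigcap_{w_1,\dots,w_n\in H}\overline{\mathrm{conv}}\{\frac1n\sum_{j=1}^n k(x,w_j): x\in L\}$, where $\overline{\mathrm{conv}}$ denotes the closed convex hull in $\mathbb{R}\cup\{+\infty\}$ (a closed interval), and $R(H,L):=\bigcap_{n=1}^\infty R_n(H,L)$. Equivalently, $R(H,L)=[M(H,L),\overline{M}(H,L)]$ (with $[a,b]=\emptyset$ if $a>b$), where $M(H,L)=\lim_n M_n(H,L)$, $\overline{M}(H,L)=\lim_n\overline{M}_n(H,L)$, $M_n(H,L)=\sup_{w_1,\dots,w_n\in H}\inf_{x\in L}\frac1n\sum_{j=1}^n k(x,w_j)$ and $\overline{M}_n(H,L)=\inf_{w_1,\dots,w_n\in H}\sup_{x\in L}\frac1n\sum_{j=1}^n k(x,w_j)$. *)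

theory Defs
  imports "HOL-Analysis.Analysis"
begin

text \<open>The closed convex hull of a set S of values in [0,+\<infinity>] is the closed
  interval [Inf S, Sup S] (closure taken in the extended topology).\<close>

definition cl_conv_hull :: "ennreal set \<Rightarrow> ennreal set" where
  "cl_conv_hull S = {t. Inf S \<le> t \<and> t \<le> Sup S}"

definition rendezvous_n ::
  "('a \<Rightarrow> 'a \<Rightarrow> ennreal) \<Rightarrow> nat \<Rightarrow> 'a set \<Rightarrow> 'a set \<Rightarrow> ennreal set" where
  "rendezvous_n k n H L =
     (\<Inter>w \<in> {w. \<forall>j<n. w j \<in> H}.
        cl_conv_hull ((\<lambda>x. (\<Sum>j<n. k x (w j)) / of_nat n) ` L))"

definition rendezvous ::
  "('a \<Rightarrow> 'a \<Rightarrow> ennreal) \<Rightarrow> 'a set \<Rightarrow> 'a set \<Rightarrow> ennreal set" where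
  "rendezvous k H L = (\<Inter>n \<in> {1..}. rendezvous_n k n H L)"

end

theory Submission
  imports Defs
begin

text \<open>For tuples \<open>w\<close> of length \<open>n\<close> and \<open>v\<close> of length \<open>m\<close> in \<open>L\<close>, the double sum
  \<open>\<Sum>i<m. \<Sum>j<n. k (v i) (w j)\<close> is at least \<open>m n\<close> times the infimum over \<open>L\<close> of the
  mean potential of \<open>w\<close> and, by symmetry of \<open>k\<close>, at most \<open>m n\<close> times the supremum over
  \<open>L\<close> of the mean potential of \<open>v\<close>. Hence every lower end of an interval defining the
  rendezvous set lies below every upper end, and the supremum of all lower ends lies in
  all of these intervals.\<close>

definition kernel_mean :: "('a \<Rightarrow> 'a \<Rightarrow> ennreal) \<Rightarrow> nat \<Rightarrow> (nat \<Rightarrow> 'a) \<Rightarrow> 'a \<Rightarrow> ennreal" where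
  "kernel_mean k n w x = (\<Sum>j<n. k x (w j)) / of_nat n"

lemma mem_rendezvous_iff:
  "t \<in> rendezvous k H L \<longleftrightarrow>
     (\<forall>n\<ge>1. \<forall>w. (\<forall>j<n. w j \<in> H) \<longrightarrow>
        Inf (kernel_mean k n w ` L) \<le> t \<and> t \<le> Sup (kernel_mean k n w ` L))"
  unfolding rendezvous_def rendezvous_n_def cl_conv_hull_def kernel_mean_def by auto

lemma of_nat_mult_kernel_mean:
  assumes "n \<ge> 1"
  shows "of_nat n * kernel_mean k n w x = (\<Sum>j<n. k x (w j))"
  using assms by (simp add: kernel_mean_def ennreal_times_divide mult.commute[of "of_nat n"]
      ennreal_mult_divide_eq)

lemma Inf_kernel_mean_le_Sup_kernel_mean:
  fixes k :: "'a \<Rightarrow> 'a \<Rightarrow> ennreal"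
  assumes sym: "\<And>x y. k x y = k y x"
    and n: "n \<ge> 1" and m: "m \<ge> 1"
    and w: "\<forall>j<n. w j \<in> L" and v: "\<forall>i<m. v i \<in> L"
  shows "Inf (kernel_mean k n w ` L) \<le> Sup (kernel_mean k m v ` L)"
proof -
  define A where "A = Inf (kernel_mean k n w ` L)"
  define B where "B = Sup (kernel_mean k m v ` L)"
  define S where "S = (\<Sum>i<m. \<Sum>j<n. k (v i) (w j))"
  have "of_nat (m * n) * A = (\<Sum>i<m. of_nat n * A)"
    by (simp add: mult.assoc)
  also have "\<dots> \<le> (\<Sum>i<m. of_nat n * kernel_mean k n w (v i))"
    using v by (intro sum_mono mult_left_mono) (auto simp: A_def intro: Inf_lower)
  also have "\<dots> = S"
    by (simp add: S_def of_nat_mult_kernel_mean[OF n])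
  also have "S = (\<Sum>j<n. of_nat m * kernel_mean k m v (w j))"
    by (simp add: S_def of_nat_mult_kernel_mean[OF m] sum.swap[of _ "{..<m}"] sym)
  also have "\<dots> \<le> (\<Sum>j<n. of_nat m * B)"
    using w by (intro sum_mono mult_left_mono) (auto simp: B_def intro: Sup_upper)
  also have "\<dots> = of_nat (m * n) * B"
    by (simp add: mult_ac)
  finally have "of_nat (m * n) * A \<le> of_nat (m * n) * B" .
  moreover have "of_nat (m * n) \<noteq> (0::ennreal)"
    using n m by simp
  moreover have "of_nat (m * n) \<noteq> (top::ennreal)"
    by (rule ennreal_of_nat_neq_top)
  ultimately show ?thesis
    unfolding A_def B_def by (metis ennreal_mult_le_mult_iff)
qed

theorem proposition2p2:
  fixes k :: "'a \<Rightarrow> 'a \<Rightarrow> ennreal" and H L :: "'a set"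
  assumes "\<And>x y. k x y = k y x"
    and "H \<noteq> {}" and "H \<subseteq> L"
  shows "rendezvous k H L \<noteq> {}"
proof -
  define tuples where "tuples = {(n, w). n \<ge> (1::nat) \<and> (\<forall>j<n. w j \<in> H)}"
  define t where "t = (SUP (n, w)\<in>tuples. Inf (kernel_mean k n w ` L))"
  have "Inf (kernel_mean k n w ` L) \<le> t \<and> t \<le> Sup (kernel_mean k n w ` L)"
    if "n \<ge> 1" and "\<forall>j<n. w j \<in> H" for n w
  proof
    show "Inf (kernel_mean k n w ` L) \<le> t"
      unfolding t_def using that by (intro SUP_upper2[of "(n, w)"]) (auto simp: tuples_def)
    show "t \<le> Sup (kernel_mean k n w ` L)"
      unfolding t_def tuples_def using that assms(1,3)
      by (intro SUP_least) (auto intro!: Inf_kernel_mean_le_Sup_kernel_mean)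
  qed
  then have "t \<in> rendezvous k H L"
    by (simp add: mem_rendezvous_iff)
  then show ?thesis by auto
qed

end
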